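(* For every odd prime $p$ there exists a $\Gamma_p$-equivariant continuous map $f:S(U_1\oplus U_1)\to S(U_p\oplus (p-1)V_1)$. (Here $\dim_{\mathbb{R}}(U_1\oplus U_1)=4p>\dim_{\mathbb{R}}(U_p\oplus(p-1)V_1)=4p-2$, and both representations have no nonzero $\Gamma_p$-fixed vectors.)
   Context: Let $a$ be a fixed generator of $C_p$ and $\xi_p=e^{2\pi\sqrt{-1}/p}$. $\Gamma_p=T^{p-1}\rtimes_\rho C_p$ is the semidirect product with $a t a^{-1}=\rho(a)(t)$, $\rho(a)(t)=(t_{p-1}^{-1},\,t_1t_{p-1}^{-1},\dots,t_{p-2}t_{p-1}^{-1})$ for $t=(t_1,\dots,t_{p-1})$. For $k\in\mathbb{Z}\setminus\{0\}$, $U_k=\mathbb{C}^p$ with coordinates $(z_0,\dots,z_{p-1})$, $a\cdot(z_0,\dots,z_{p-1})=(z_{p-1},z_0,\dots,z_{p-2})$ and $t\cdot(z_0,\dots,z_{p-1})=(t_1^kz_0,\ t_1^{-k}t_2^kz_1,\ \dots,\ t_{p-2}^{-k}t_{p-1}^kz_{p-2},\ t_{p-1}^{-k}z_{p-1})$. $V_1=\mathbb{C}$ with $T^{p-1}$ acting trivially and $a\cdot z=\xi_pz$; $(p-1)V_1$ is the direct sum of $p-1$ copies. $S(\cdot)$ denotes the unit sphere of the underlying real representation. *)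

theory Defs
  imports "HOL-Analysis.Analysis"
begin

text \<open>Vectors of C^n are represented as functions nat => complex whose coordinates
  with index >= n vanish; the topology is the product topology, which on this
  finite-dimensional subspace is the Euclidean one.\<close>

definition xi :: "nat \<Rightarrow> complex" where
  "xi p = cis (2 * pi / real p)"

text \<open>The torus T^(p-1): coordinates t 1, ..., t (p-1) are unit complex numbers;
  the auxiliary coordinates t 0 and t i (i >= p) are fixed to 1 (convention t_0 = t_p = 1).\<close>
definition torus :: "nat \<Rightarrow> (nat \<Rightarrow> complex) set" where
  "torus p = {t. (\<forall>i\<in>{1..p-1}. cmod (t i) = 1) \<and> (\<forall>i. (i = 0 \<or> p \<le> i) \<longrightarrow> t i = 1)}"

text \<open>Action of the element t a^j (t in the torus, 0 <= j < p) of Gamma_p on U_k = C^p: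
  (a^j z)_i = z_{(i-j) mod p}, and t multiplies z_i by t_i^(-k) t_(i+1)^k.\<close>
definition actU :: "nat \<Rightarrow> int \<Rightarrow> (nat \<Rightarrow> complex) \<Rightarrow> nat \<Rightarrow> (nat \<Rightarrow> complex) \<Rightarrow> (nat \<Rightarrow> complex)" where
  "actU p k t j z = (\<lambda>i. if i < p then (t i) powi (-k) * (t (Suc i)) powi k * z ((i + p - j) mod p) else 0)"

text \<open>U_1 + U_1 = C^(2p): coordinates 0..p-1 are the first copy, p..2p-1 the second.\<close>
definition actDom :: "nat \<Rightarrow> (nat \<Rightarrow> complex) \<Rightarrow> nat \<Rightarrow> (nat \<Rightarrow> complex) \<Rightarrow> (nat \<Rightarrow> complex)" where
  "actDom p t j z = (\<lambda>i. if i < p then actU p 1 t j z i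
                          else if i < 2 * p then actU p 1 t j (\<lambda>m. z (m + p)) (i - p)
                          else 0)"

text \<open>U_p + (p-1) V_1 = C^(2p-1): coordinates 0..p-1 are U_p, p..2p-2 the copies of V_1
  (torus acts trivially, a acts by xi_p).\<close>
definition actCod :: "nat \<Rightarrow> (nat \<Rightarrow> complex) \<Rightarrow> nat \<Rightarrow> (nat \<Rightarrow> complex) \<Rightarrow> (nat \<Rightarrow> complex)" where
  "actCod p t j w = (\<lambda>i. if i < p then actU p (int p) t j w i
                          else if i < 2 * p - 1 then (xi p) ^ j * w i
                          else 0)"

definition csphere :: "nat \<Rightarrow> (nat \<Rightarrow> complex) set" where
  "csphere n = {z. (\<forall>i\<ge>n. z i = 0) \<and> (\<Sum>i<n. (cmod (z i))\<^sup>2) = 1}"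

end

theory Submission
  imports Defs "HOL-Library.Real_Mod" "HOL-Number_Theory.Cong"
begin

text \<open>
  Write z, w for the two copies of U_1. The torus multiplies z_i by t_(i+1)/t_i, and these
  ratios have product 1, so the product of the z_i is invariant and z_i^p times the conjugate
  of that product defines an equivariant polynomial map U_1 \<rightarrow> U_p. The vector
  q_i = |z_i|^2 + \<i>|w_i|^2 is torus invariant and is rotated by a, so its discrete Fourier
  coefficient of frequency m is multiplied by xi^(mj) under a^j; raising it to a power n with
  m n = 1 mod p turns this into the character of V_1. Together these give an equivariant
  polynomial map F : U_1 + U_1 \<rightarrow> U_p + (p-1) V_1, and f = F / |F|.

  F vanishes only at 0. If all Fourier coefficients of nonzero frequency vanish, q is constant,
  so |z_i| and |w_i| do not depend on i. If moreover z_i^p conj(\<Prod>z) = - w_i^p conj(\<Prod>w) for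
  all i, taking the product over i gives |\<Prod>z|^(2p) = (-1)^p |\<Prod>w|^(2p), which for odd p forces
  both products, hence (by the constant moduli) z and w, to vanish.
\<close>

lemma xi_pow_self: "0 < p \<Longrightarrow> xi p ^ p = 1"
  by (simp add: xi_def Complex.DeMoivre)

lemma norm_xi [simp]: "cmod (xi p) = 1"
  by (simp add: xi_def)

lemma xi_pow_mod:
  assumes "0 < p"
  shows "xi p ^ (k mod p) = xi p ^ k"
proof -
  have "xi p ^ k = xi p ^ (p * (k div p) + k mod p)" by simp
  also have "\<dots> = (xi p ^ p) ^ (k div p) * xi p ^ (k mod p)"
    by (simp only: power_add power_mult)
  finally show ?thesis using xi_pow_self[OF assms] by simp
qed

lemma xi_pow_mult_mod:
  assumes "0 < p"
  shows "xi p ^ (m * (k mod p)) = xi p ^ (m * k)"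
proof -
  have "xi p ^ (m * (k mod p)) = xi p ^ ((m * (k mod p)) mod p)"
    by (rule xi_pow_mod[OF assms, symmetric])
  also have "(m * (k mod p)) mod p = (m * k) mod p"
    by (simp add: mod_mult_right_eq)
  finally show ?thesis by (simp add: xi_pow_mod[OF assms])
qed

lemma xi_pow_eq_1_iff:
  assumes "0 < p"
  shows "xi p ^ k = 1 \<longleftrightarrow> p dvd k"
proof
  assume "xi p ^ k = 1"
  then have "cis (real k * (2 * pi) / real p) = 1"
    by (simp add: xi_def Complex.DeMoivre)
  then obtain n where "real k * (2 * pi) / real p = of_int n * (2 * pi)"
    using cis_eq_1_iff by blast
  then have "real k * (2 * pi) = of_int n * real p * (2 * pi)"
    using assms by (simp add: divide_eq_eq)
  then have "real k = of_int n * real p"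
    by simp
  then have "int k = n * int p"
    by (metis of_int_eq_iff of_int_mult of_int_of_nat_eq)
  then show "p dvd k"
    by (metis dvd_triv_right int_dvd_int_iff)
next
  assume "p dvd k"
  then obtain c where "k = p * c" ..
  then show "xi p ^ k = 1" by (simp add: power_mult xi_pow_self assms)
qed

lemma sum_roots_of_unity:
  assumes "0 < p"
  shows "(\<Sum>m<p. (xi p ^ k) ^ m) = (if p dvd k then of_nat p else 0)"
proof (cases "p dvd k")
  case False
  then have "xi p ^ k \<noteq> 1" using xi_pow_eq_1_iff[OF assms] by simp
  then have "(\<Sum>m<p. (xi p ^ k) ^ m) = ((xi p ^ k) ^ p - 1) / (xi p ^ k - 1)"
    by (rule geometric_sum)
  also have "(xi p ^ k) ^ p = 1"
    by (metis assms mult.commute power_mult power_one xi_pow_self)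
  finally show ?thesis using False by simp
next
  case True
  then have "xi p ^ k = 1" using xi_pow_eq_1_iff[OF assms] by simp
  with True show ?thesis by simp
qed

lemma dvd_rotation_iff:
  fixes p :: nat
  assumes "i < p" "l < p"
  shows "p dvd (i + p - l) \<longleftrightarrow> i = l"
proof
  assume "p dvd (i + p - l)"
  then obtain c where c: "i + p - l = p * c" ..
  have "p * c < p * 2" using c assms by linarith
  moreover have "c \<noteq> 0" using c assms by (intro notI) simp
  ultimately have "c = 1" by simp
  with c assms show "i = l" by simp
qed simp

lemma rotation_inverse_left: "j < p \<Longrightarrow> i < p \<Longrightarrow> ((i + p - j) mod p + j) mod p = i"
  for p :: nat
proof -
  assume "j < p" "i < p"
  have "((i + p - j) mod p + j) mod p = (i + p - j + j) mod p" by (metis mod_add_left_eq)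
  also have "\<dots> = (i + p) mod p" using \<open>j < p\<close> by simp
  finally show ?thesis using \<open>i < p\<close> by simp
qed

lemma rotation_inverse_right: "j < p \<Longrightarrow> i < p \<Longrightarrow> ((i + j) mod p + p - j) mod p = i"
  for p :: nat
proof -
  assume "j < p" "i < p"
  then have "((i + j) mod p + p - j) mod p = ((i + j) mod p + (p - j)) mod p" by simp
  also have "\<dots> = (i + j + (p - j)) mod p" by (metis mod_add_left_eq)
  also have "\<dots> = (i + p) mod p" using \<open>j < p\<close> by simp
  finally show ?thesis using \<open>i < p\<close> by simp
qed

lemma bij_betw_rotation: "j < p \<Longrightarrow> bij_betw (\<lambda>i. (i + p - j) mod p) {..<p} {..<p}"
  for p :: nat
  by (rule bij_betw_byWitness[where f' = "\<lambda>i. (i + j) mod p"])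
    (auto simp: rotation_inverse_left rotation_inverse_right)

lemma bij_betw_rotation_inverse: "j < p \<Longrightarrow> bij_betw (\<lambda>i. (i + j) mod p) {..<p} {..<p}"
  for p :: nat
  by (rule bij_betw_byWitness[where f' = "\<lambda>i. (i + p - j) mod p"])
    (auto simp: rotation_inverse_left rotation_inverse_right)

subsection \<open>Discrete Fourier transform on the cyclic group of order p\<close>

definition dft :: "nat \<Rightarrow> (nat \<Rightarrow> complex) \<Rightarrow> nat \<Rightarrow> complex" where
  "dft p q m = (\<Sum>i<p. xi p ^ (m * i) * q i)"

lemma dft_inversion:
  assumes "l < p"
  shows "(\<Sum>m<p. xi p ^ (m * (p - l)) * dft p q m) = of_nat p * q l"
proof -
  have p: "0 < p" using assms by simp
  have exponent: "xi p ^ (m * (p - l)) * (xi p ^ (m * i) * q i) = q i * (xi p ^ (i + p - l)) ^ m"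
    if "i < p" for m i
  proof -
    have "m * (p - l) + m * i = (i + p - l) * m" using assms by (simp add: algebra_simps)
    then have "xi p ^ (m * (p - l)) * xi p ^ (m * i) = (xi p ^ (i + p - l)) ^ m"
      by (metis power_add power_mult)
    then show ?thesis by (metis mult.assoc mult.commute)
  qed
  have "(\<Sum>m<p. xi p ^ (m * (p - l)) * dft p q m)
      = (\<Sum>m<p. \<Sum>i<p. q i * (xi p ^ (i + p - l)) ^ m)"
    unfolding dft_def sum_distrib_left by (intro sum.cong refl) (simp add: exponent)
  also have "\<dots> = (\<Sum>i<p. q i * (\<Sum>m<p. (xi p ^ (i + p - l)) ^ m))"
    by (subst sum.swap) (simp add: sum_distrib_left)
  also have "\<dots> = (\<Sum>i<p. if i = l then q i * of_nat p else 0)"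
    by (intro sum.cong refl) (simp add: sum_roots_of_unity[OF p] dvd_rotation_iff assms)
  finally show ?thesis using assms by simp
qed

lemma dft_vanishing_imp_constant:
  assumes "0 < p" "\<And>m. 0 < m \<Longrightarrow> m < p \<Longrightarrow> dft p q m = 0" "l < p"
  shows "q l = q 0"
proof -
  have only_zero: "(\<Sum>m<p. xi p ^ (m * (p - k)) * dft p q m) = dft p q 0" for k
    using assms(1,2) by (subst sum.remove[of _ 0]) (auto intro: sum.neutral)
  have "of_nat p * q l = dft p q 0"
    using dft_inversion[OF assms(3), where q = q] only_zero by simp
  moreover have "of_nat p * q 0 = dft p q 0"
    using dft_inversion[OF assms(1), where q = q] only_zero[of 0] by simp
  ultimately have "of_nat p * q l = of_nat p * q 0" by simp
  then show ?thesis using assms(1) by simp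
qed

lemma dft_rotate:
  fixes p :: nat
  assumes "j < p"
  shows "dft p (\<lambda>i. q ((i + p - j) mod p)) m = xi p ^ (m * j) * dft p q m"
proof -
  have p: "0 < p" using assms by simp
  have "dft p (\<lambda>i. q ((i + p - j) mod p)) m
      = (\<Sum>i<p. xi p ^ (m * ((i + j) mod p)) * q (((i + j) mod p + p - j) mod p))"
    unfolding dft_def
    by (rule sum.reindex_bij_betw[OF bij_betw_rotation_inverse[OF assms], symmetric])
  also have "\<dots> = (\<Sum>i<p. xi p ^ (m * j) * (xi p ^ (m * i) * q i))"
    by (intro sum.cong refl)
      (simp add: rotation_inverse_right assms xi_pow_mult_mod[OF p] distrib_left power_add)
  finally show ?thesis by (simp add: dft_def sum_distrib_left)
qed

definition inv_mod :: "nat \<Rightarrow> nat \<Rightarrow> nat" where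
  "inv_mod p m = (SOME n. [m * n = 1] (mod p))"

lemma inv_mod_cong: "coprime m p \<Longrightarrow> [m * inv_mod p m = 1] (mod p)"
  unfolding inv_mod_def using cong_solve_coprime_nat[of m p] by (auto intro: someI_ex)

lemma xi_pow_inv_mod:
  assumes "0 < p" "coprime m p"
  shows "(xi p ^ (m * j)) ^ inv_mod p m = xi p ^ j"
proof -
  have "(m * inv_mod p m * j) mod p = j mod p"
    using inv_mod_cong[OF assms(2)] unfolding cong_def by (metis mod_mult_left_eq mult_1)
  then have "xi p ^ (m * inv_mod p m * j) = xi p ^ j"
    by (metis xi_pow_mod[OF assms(1)])
  then show ?thesis
    by (simp add: power_mult[symmetric] ac_simps)
qed

subsection \<open>The torus and its representations U_k\<close>

lemma torus_norm: "t \<in> torus p \<Longrightarrow> cmod (t i) = 1"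
  unfolding torus_def by (cases "i = 0 \<or> p \<le> i") auto

lemma prod_torus_ratio:
  assumes "t \<in> torus p"
  shows "(\<Prod>i<p. t (Suc i) / t i) = 1"
proof -
  have "t i \<noteq> 0" for i
    using torus_norm[OF assms, of i] by auto
  then have "(\<Prod>i<p. t (Suc i) / t i) = t p / t 0"
    by (intro prod_lessThan_telescope)
  moreover have "t p = 1" "t 0 = 1"
    using assms unfolding torus_def by auto
  ultimately show ?thesis by simp
qed

lemma prod_power_int_distrib: "(\<Prod>i\<in>A. f i powi k) = (\<Prod>i\<in>A. f i) powi k"
  for f :: "'b \<Rightarrow> 'a::field"
  by (induction A rule: infinite_finite_induct) (simp_all add: power_int_mult_distrib)

lemma actU_apply:
  "i < p \<Longrightarrow> actU p k t j z i = (t (Suc i) / t i) powi k * z ((i + p - j) mod p)"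
  by (simp add: actU_def divide_inverse_commute power_int_mult_distrib power_int_inverse
      power_int_minus)

lemma prod_actU:
  fixes p :: nat
  assumes "t \<in> torus p" "j < p"
  shows "(\<Prod>i<p. actU p k t j z i) = (\<Prod>i<p. z i)"
proof -
  have "(\<Prod>i<p. actU p k t j z i)
      = (\<Prod>i<p. t (Suc i) / t i) powi k * (\<Prod>i<p. z ((i + p - j) mod p))"
    by (simp add: actU_apply prod.distrib prod_power_int_distrib)
  also have "(\<Prod>i<p. z ((i + p - j) mod p)) = (\<Prod>i<p. z i)"
    by (rule prod.reindex_bij_betw[OF bij_betw_rotation[OF assms(2)]])
  finally show ?thesis using prod_torus_ratio[OF assms(1)] by simp
qed

lemma norm_actU:
  "t \<in> torus p \<Longrightarrow> i < p \<Longrightarrow> cmod (actU p k t j z i) = cmod (z ((i + p - j) mod p))"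
  by (simp add: actU_apply norm_mult norm_power_int norm_divide torus_norm)

lemma sum_norm_actU:
  fixes p :: nat
  assumes "t \<in> torus p" "j < p"
  shows "(\<Sum>i<p. (cmod (actU p k t j z i))\<^sup>2) = (\<Sum>i<p. (cmod (z i))\<^sup>2)"
proof -
  have "(\<Sum>i<p. (cmod (actU p k t j z i))\<^sup>2) = (\<Sum>i<p. (cmod (z ((i + p - j) mod p)))\<^sup>2)"
    by (simp add: norm_actU[OF assms(1)])
  also have "\<dots> = (\<Sum>i<p. (cmod (z i))\<^sup>2)"
    by (rule sum.reindex_bij_betw[OF bij_betw_rotation[OF assms(2)]])
  finally show ?thesis .
qed

definition upper_block :: "nat \<Rightarrow> (nat \<Rightarrow> 'a) \<Rightarrow> nat \<Rightarrow> 'a" where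
  "upper_block p z i = z (i + p)"

lemma actDom_lower: "i < p \<Longrightarrow> actDom p t j z i = actU p 1 t j z i"
  by (simp add: actDom_def)

lemma upper_block_actDom: "upper_block p (actDom p t j z) = actU p 1 t j (upper_block p z)"
  by (auto simp: fun_eq_iff upper_block_def actDom_def actU_def)

lemma actCod_lower: "i < p \<Longrightarrow> actCod p t j w i = actU p (int p) t j w i"
  by (simp add: actCod_def)

lemma actCod_middle: "p \<le> i \<Longrightarrow> i < 2 * p - 1 \<Longrightarrow> actCod p t j w i = xi p ^ j * w i"
  by (simp add: actCod_def)

lemma actCod_upper: "2 * p - 1 \<le> i \<Longrightarrow> actCod p t j w i = 0"
  by (simp add: actCod_def)

lemma sum_norm_actCod:
  fixes p :: nat
  assumes "t \<in> torus p" "j < p"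
  shows "(\<Sum>i<2 * p - 1. (cmod (actCod p t j w i))\<^sup>2) = (\<Sum>i<2 * p - 1. (cmod (w i))\<^sup>2)"
proof -
  have split: "(\<Sum>i<2 * p - 1. g i) = (\<Sum>i<p. g i) + (\<Sum>i=p..<2 * p - 1. g i)" for g :: "nat \<Rightarrow> real"
    using sum.atLeastLessThan_concat[of 0 p "2 * p - 1" g] assms(2) by (simp add: atLeast0LessThan)
  have "(\<Sum>i<p. (cmod (actCod p t j w i))\<^sup>2) = (\<Sum>i<p. (cmod (w i))\<^sup>2)"
    using sum_norm_actU[OF assms, of "int p" w] by (simp add: actCod_lower)
  moreover have "(\<Sum>i=p..<2 * p - 1. (cmod (actCod p t j w i))\<^sup>2) = (\<Sum>i=p..<2 * p - 1. (cmod (w i))\<^sup>2)"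
    by (intro sum.cong refl) (simp add: actCod_middle norm_mult norm_power)
  ultimately show ?thesis unfolding split by simp
qed

subsection \<open>An equivariant polynomial map\<close>

definition power_prod :: "nat \<Rightarrow> (nat \<Rightarrow> complex) \<Rightarrow> nat \<Rightarrow> complex" where
  "power_prod p u i = u i ^ p * cnj (\<Prod>l<p. u l)"

lemma power_prod_actU:
  fixes p :: nat
  assumes "t \<in> torus p" "j < p" "i < p"
  shows "power_prod p (actU p 1 t j u) i = actU p (int p) t j (power_prod p u) i"
  unfolding power_prod_def prod_actU[OF assms(1,2)]
  using assms(3) by (simp add: actU_apply power_mult_distrib power_divide)

lemma power_prod_actDom:
  fixes p :: nat
  assumes "t \<in> torus p" "j < p" "i < p"
  shows "power_prod p (actDom p t j z) i = actU p (int p) t j (power_prod p z) i"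
proof -
  have "power_prod p (actDom p t j z) i = power_prod p (actU p 1 t j z) i"
    using assms(3) by (simp add: power_prod_def actDom_lower)
  then show ?thesis using power_prod_actU[OF assms] by simp
qed

definition herm_quad :: "nat \<Rightarrow> (nat \<Rightarrow> complex) \<Rightarrow> nat \<Rightarrow> complex" where
  "herm_quad p z i = of_real ((cmod (z i))\<^sup>2) + \<i> * of_real ((cmod (z (i + p)))\<^sup>2)"

lemma herm_quad_eq_iff:
  "herm_quad p z i = herm_quad p z l \<longleftrightarrow>
     cmod (z i) = cmod (z l) \<and> cmod (z (i + p)) = cmod (z (l + p))"
  by (simp add: herm_quad_def complex_eq_iff power2_eq_iff_nonneg)

lemma herm_quad_actDom:
  assumes "t \<in> torus p" "i < p"
  shows "herm_quad p (actDom p t j z) i = herm_quad p z ((i + p - j) mod p)"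
proof -
  have "actDom p t j z (i + p) = actU p 1 t j (upper_block p z) i"
    using upper_block_actDom[of p t j z] unfolding upper_block_def by metis
  then show ?thesis
    using assms by (simp add: herm_quad_def actDom_lower norm_actU upper_block_def)
qed

lemma dft_herm_quad_actDom:
  fixes p :: nat
  assumes "t \<in> torus p" "j < p"
  shows "dft p (herm_quad p (actDom p t j z)) m = xi p ^ (m * j) * dft p (herm_quad p z) m"
proof -
  have "dft p (herm_quad p (actDom p t j z)) m = dft p (\<lambda>i. herm_quad p z ((i + p - j) mod p)) m"
    unfolding dft_def by (intro sum.cong refl) (simp add: herm_quad_actDom[OF assms(1)])
  then show ?thesis using dft_rotate[OF assms(2)] by simp
qed

definition equivariant_poly :: "nat \<Rightarrow> (nat \<Rightarrow> complex) \<Rightarrow> nat \<Rightarrow> complex" where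
  "equivariant_poly p z i =
     (if i < p then power_prod p z i + power_prod p (upper_block p z) i
      else if i < 2 * p - 1 then dft p (herm_quad p z) (i + 1 - p) ^ inv_mod p (i + 1 - p)
      else 0)"

lemma equivariant_poly_actDom:
  assumes "prime p" "t \<in> torus p" "j < p"
  shows "equivariant_poly p (actDom p t j z) = actCod p t j (equivariant_poly p z)"
proof
  fix i
  have p: "0 < p" using assms(3) by simp
  consider "i < p" | "p \<le> i" "i < 2 * p - 1" | "2 * p - 1 \<le> i" by linarith
  then show "equivariant_poly p (actDom p t j z) i = actCod p t j (equivariant_poly p z) i"
  proof cases
    case 1
    have "(i + p - j) mod p < p" using p by simp
    with 1 show ?thesis
      by (simp add: equivariant_poly_def actCod_lower power_prod_actDom upper_block_actDom
          power_prod_actU assms(2,3) actU_apply distrib_left)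
  next
    case 2
    define m where "m = i + 1 - p"
    have "0 < m" "m < p" using 2 by (auto simp: m_def)
    then have "coprime m p"
      using assms(1) by (metis coprime_commute nat_dvd_not_less prime_imp_coprime)
    then have "(xi p ^ (m * j) * dft p (herm_quad p z) m) ^ inv_mod p m
        = xi p ^ j * dft p (herm_quad p z) m ^ inv_mod p m"
      by (simp add: power_mult_distrib xi_pow_inv_mod[OF p])
    with 2 show ?thesis
      by (simp add: equivariant_poly_def actCod_middle dft_herm_quad_actDom assms(2,3) m_def)
  next
    case 3
    then show ?thesis by (simp add: equivariant_poly_def actCod_upper)
  qed
qed

lemma prod_power_prod: "(\<Prod>i<p. power_prod p u i) = of_real ((cmod (\<Prod>l<p. u l))\<^sup>2 ^ p)"
proof -
  have "(\<Prod>i<p. power_prod p u i) = (\<Prod>i<p. u i ^ p) * (\<Prod>i<p. cnj (\<Prod>l<p. u l))"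
    unfolding power_prod_def by (rule prod.distrib)
  also have "\<dots> = ((\<Prod>l<p. u l) * cnj (\<Prod>l<p. u l)) ^ p"
    by (simp only: prod_power_distrib prod_constant card_lessThan power_mult_distrib)
  also have "\<dots> = of_real ((cmod (\<Prod>l<p. u l))\<^sup>2 ^ p)"
    by (simp only: complex_norm_square[symmetric] of_real_power[symmetric])
  finally show ?thesis .
qed

lemma power_prod_sum_eq_zero_imp:
  assumes "odd p" "\<And>i. i < p \<Longrightarrow> power_prod p u i + power_prod p v i = 0"
  shows "(\<Prod>l<p. u l) = 0 \<and> (\<Prod>l<p. v l) = 0"
proof -
  have "(\<Prod>i<p. power_prod p u i) = (\<Prod>i<p. - power_prod p v i)"
    using assms(2) by (intro prod.cong refl) (simp add: eq_neg_iff_add_eq_0)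
  also have "\<dots> = - (\<Prod>i<p. power_prod p v i)"
    using assms(1) by (simp add: prod_uminus)
  finally have "(cmod (\<Prod>l<p. u l))\<^sup>2 ^ p + (cmod (\<Prod>l<p. v l))\<^sup>2 ^ p = 0"
    unfolding prod_power_prod by (metis add.commute add_eq_0_iff of_real_eq_iff of_real_minus)
  then show ?thesis
    using assms(1) by (simp add: add_nonneg_eq_0_iff)
qed

lemma eq_zero_if_prod_eq_zero_const_norm:
  fixes p :: nat
  assumes "(\<Prod>l<p. u l) = 0" "\<And>l. l < p \<Longrightarrow> cmod (u l) = c" "i < p"
  shows "u i = 0"
proof -
  obtain k where "k < p" "u k = 0" using assms(1) by (auto simp: prod_zero_iff)
  then have "c = 0" using assms(2) by force
  then show ?thesis using assms(2,3) by simp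
qed

lemma sum_lessThan_double: "(\<Sum>i<2 * n. f i) = (\<Sum>i<n. f i) + (\<Sum>i<n. f (i + n))"
  for n :: nat
proof -
  have "(\<Sum>i<2 * n. f i) = (\<Sum>i<n. f i) + (\<Sum>i=n..<n + n. f i)"
    using sum.atLeastLessThan_concat[of 0 n "n + n" f] by (simp add: atLeast0LessThan mult_2)
  also have "(\<Sum>i=n..<n + n. f i) = (\<Sum>i<n. f (i + n))"
    using sum.shift_bounds_nat_ivl[of f 0 n n] by (simp add: atLeast0LessThan)
  finally show ?thesis .
qed

lemma equivariant_poly_nonzero:
  assumes "prime p" "odd p" "z \<in> csphere (2 * p)"
  shows "\<exists>i<2 * p - 1. equivariant_poly p z i \<noteq> 0"
proof (rule ccontr)
  assume "\<not> ?thesis"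
  then have vanish: "equivariant_poly p z i = 0" if "i < 2 * p - 1" for i
    using that by blast
  have p: "0 < p" using assms(1) prime_gt_0_nat by blast
  have dft_vanish: "dft p (herm_quad p z) m = 0" if "0 < m" "m < p" for m
  proof -
    have "m + p - 1 < 2 * p - 1" "\<not> m + p - 1 < p" "m + p - 1 + 1 - p = m"
      using that by linarith+
    then show ?thesis using vanish[of "m + p - 1"] by (simp add: equivariant_poly_def)
  qed
  have "cmod (z l) = cmod (z 0) \<and> cmod (upper_block p z l) = cmod (upper_block p z 0)"
    if "l < p" for l
    using dft_vanishing_imp_constant[OF p dft_vanish that]
    unfolding herm_quad_eq_iff upper_block_def .
  then have const_lower: "cmod (z l) = cmod (z 0)"
    and const_upper: "cmod (upper_block p z l) = cmod (upper_block p z 0)" if "l < p" for l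
    using that by blast+
  have "power_prod p z i + power_prod p (upper_block p z) i = 0" if "i < p" for i
    using vanish[of i] that by (simp add: equivariant_poly_def)
  from power_prod_sum_eq_zero_imp[OF assms(2) this]
  have "z i = 0" "upper_block p z i = 0" if "i < p" for i
    using eq_zero_if_prod_eq_zero_const_norm const_lower const_upper that by blast+
  then have "(\<Sum>i<2 * p. (cmod (z i))\<^sup>2) = 0"
    by (simp add: sum_lessThan_double[where n = p] upper_block_def)
  with assms(3) show False by (simp add: csphere_def)
qed

definition cnormalize :: "nat \<Rightarrow> (nat \<Rightarrow> complex) \<Rightarrow> nat \<Rightarrow> complex" where
  "cnormalize n w i = w i / of_real (sqrt (\<Sum>l<n. (cmod (w l))\<^sup>2))"

lemma sum_norm_square_pos:
  fixes n :: nat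
  assumes "i < n" "w i \<noteq> 0"
  shows "0 < (\<Sum>l<n. (cmod (w l))\<^sup>2)"
proof -
  have "0 < (cmod (w i))\<^sup>2" using assms(2) by simp
  also have "\<dots> \<le> (\<Sum>l<n. (cmod (w l))\<^sup>2)"
    using assms(1) by (intro member_le_sum) auto
  finally show ?thesis .
qed

lemma cnormalize_in_csphere:
  assumes "\<And>i. n \<le> i \<Longrightarrow> w i = 0" "i < n" "w i \<noteq> 0"
  shows "cnormalize n w \<in> csphere n"
proof -
  define N where "N = (\<Sum>l<n. (cmod (w l))\<^sup>2)"
  have "0 < N" unfolding N_def using assms(2,3) by (rule sum_norm_square_pos)
  then have "(\<Sum>l<n. (cmod (cnormalize n w l))\<^sup>2) = N / N"
    by (simp add: cnormalize_def N_def[symmetric] norm_divide power_divide sum_divide_distrib[symmetric])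
  then show ?thesis
    using \<open>0 < N\<close> assms(1) by (simp add: csphere_def cnormalize_def)
qed

lemma actCod_cnormalize:
  fixes p :: nat
  assumes "t \<in> torus p" "j < p"
  shows "actCod p t j (cnormalize (2 * p - 1) w) = cnormalize (2 * p - 1) (actCod p t j w)"
  unfolding cnormalize_def sum_norm_actCod[OF assms]
  by (auto simp: fun_eq_iff actCod_def actU_def)

lemma continuous_on_cnormalize:
  assumes "\<And>i. continuous_on S (\<lambda>x. g x i)" "\<And>x. x \<in> S \<Longrightarrow> \<exists>i<n. g x i \<noteq> 0"
  shows "continuous_on S (\<lambda>x. cnormalize n (g x))"
proof (rule continuous_on_coordinatewise_then_product)
  fix i
  have "complex_of_real (sqrt (\<Sum>l<n. (cmod (g x l))\<^sup>2)) \<noteq> 0" if "x \<in> S" for x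
    using assms(2)[OF that] sum_norm_square_pos by fastforce
  then show "continuous_on S (\<lambda>x. cnormalize n (g x) i)"
    unfolding cnormalize_def by (intro continuous_on_divide assms(1) continuous_intros) blast
qed

lemma continuous_on_coordinate [continuous_intros]:
  "continuous_on S (\<lambda>x :: nat \<Rightarrow> complex. x i)"
  by (rule continuous_on_subset[OF continuous_on_product_coordinates subset_UNIV])

lemma continuous_on_equivariant_poly: "continuous_on S (\<lambda>z. equivariant_poly p z i)"
proof -
  consider "i < p" | "\<not> i < p" "i < 2 * p - 1" | "\<not> i < 2 * p - 1" by blast
  then show ?thesis
  proof cases
    case 1
    then show ?thesis
      unfolding equivariant_poly_def power_prod_def upper_block_def
      by simp (intro continuous_intros)
  next
    case 2
    then show ?thesis
      unfolding equivariant_poly_def dft_def herm_quad_def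
      by simp (intro continuous_intros)
  next
    case 3
    then have "\<not> i < p" by linarith
    with 3 show ?thesis
      unfolding equivariant_poly_def by simp
  qed
qed

theorem mainTheorem12:
  fixes p :: nat
  assumes "prime p" and "odd p"
  shows "\<exists>f :: (nat \<Rightarrow> complex) \<Rightarrow> (nat \<Rightarrow> complex).
           continuous_on (csphere (2 * p)) f \<and>
           f ` csphere (2 * p) \<subseteq> csphere (2 * p - 1) \<and>
           (\<forall>t\<in>torus p. \<forall>j<p. \<forall>z\<in>csphere (2 * p).
               f (actDom p t j z) = actCod p t j (f z))"
proof -
  define f where "f z = cnormalize (2 * p - 1) (equivariant_poly p z)" for z
  have "continuous_on (csphere (2 * p)) f"
    unfolding f_def
    by (intro continuous_on_cnormalize continuous_on_equivariant_poly
        equivariant_poly_nonzero assms)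
  moreover have "f z \<in> csphere (2 * p - 1)" if z: "z \<in> csphere (2 * p)" for z
  proof -
    obtain i where "i < 2 * p - 1" "equivariant_poly p z i \<noteq> 0"
      using equivariant_poly_nonzero[OF assms z] by blast
    then show ?thesis
      unfolding f_def by (intro cnormalize_in_csphere) (auto simp: equivariant_poly_def)
  qed
  moreover have "f (actDom p t j z) = actCod p t j (f z)" if "t \<in> torus p" "j < p" for t j z
    unfolding f_def equivariant_poly_actDom[OF assms(1) that] actCod_cnormalize[OF that] ..
  ultimately show ?thesis by blast
qed

end
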